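(* For every fixed $m\ge4$ and $k\ge3$ (with $k<m$) there exists $\vec p\in(0,1)^m$ such that for every sufficiently large $n$, $$\Pr_{P\sim(\pi_{\vec p})^n}\big(|(\mathrm{JR}\subseteq_?\mathrm{CORE})(P)|=0\big)=1-\exp(-\Omega(n))\quad\text{and}\quad\Pr_{P\sim(\pi_{\vec p})^n}\big(|(\mathrm{JR}=_?\mathrm{CORE})(P)|=0\big)=1-\exp(-\Omega(n)).$$
   Context: $\mathcal A=[m]$, $\mathcal A_k$ the $k$-subsets. Approval profile $P=(A_1,\dots,A_n)$, ballots i.i.d. from $\pi_{\vec p}$ with $\Pr(A)=\prod_{i\in A}p_i\prod_{i\notin A}(1-p_i)$. $\mathrm{JR}(P)$ is the set of $W\in\mathcal A_k$ such that for every set of voters $N'\subseteq[n]$ with $|N'|\ge n/k$ and $\bigcap_{j\in N'}A_j\ne\emptyset$ there is $j\in N'$ with $A_j\cap W\ne\emptyset$. $\mathrm{CORE}(P)$ is the set of $W\in\mathcal A_k$ such that for every nonempty $N'\subseteq[n]$ and $W'\subseteq\mathcal A$ with $|W'|/k\le|N'|/n$ some $j\in N'$ has $|A_j\cap W'|\le|A_j\cap W|$. For set-valued mappings: $(f_1\subseteq_?f_2)(P)=f_1(P)$ if $f_1(P)\subseteq f_2(P)$ and $\emptyset$ otherwise; $(f_1=_?f_2)(P)=f_1(P)$ if $f_1(P)=f_2(P)$ and $\emptyset$ otherwise. *)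

theory Defs
  imports Complex_Main "HOL-Library.FuncSet"
begin

(* Alternatives are {0..<m}; voters are {0..<n}; a profile is P :: nat => nat set,
   P j = approval ballot of voter j. *)

definition alts :: "nat \<Rightarrow> nat set" where
  "alts m = {0..<m}"

definition committees :: "nat \<Rightarrow> nat \<Rightarrow> nat set set" where
  "committees m k = {W. W \<subseteq> alts m \<and> card W = k}"

definition ballot_prob :: "nat \<Rightarrow> (nat \<Rightarrow> real) \<Rightarrow> nat set \<Rightarrow> real" where
  "ballot_prob m p A = (\<Prod>i\<in>A. p i) * (\<Prod>i\<in>alts m - A. 1 - p i)"

definition profiles :: "nat \<Rightarrow> nat \<Rightarrow> (nat \<Rightarrow> nat set) set" where
  "profiles m n = PiE {0..<n} (\<lambda>_. Pow (alts m))"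

definition prof_prob :: "nat \<Rightarrow> (nat \<Rightarrow> real) \<Rightarrow> nat \<Rightarrow> ((nat \<Rightarrow> nat set) \<Rightarrow> bool) \<Rightarrow> real" where
  "prof_prob m p n E = (\<Sum>P\<in>{P\<in>profiles m n. E P}. \<Prod>j<n. ballot_prob m p (P j))"

definition JR :: "nat \<Rightarrow> nat \<Rightarrow> nat \<Rightarrow> (nat \<Rightarrow> nat set) \<Rightarrow> nat set set" where
  "JR m n k P = {W \<in> committees m k.
     \<forall>N' \<subseteq> {0..<n}. real (card N') \<ge> real n / real k \<and> (\<Inter>j\<in>N'. P j) \<noteq> {}
        \<longrightarrow> (\<exists>j\<in>N'. P j \<inter> W \<noteq> {})}"

definition CORE :: "nat \<Rightarrow> nat \<Rightarrow> nat \<Rightarrow> (nat \<Rightarrow> nat set) \<Rightarrow> nat set set" where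
  "CORE m n k P = {W \<in> committees m k.
     \<forall>N' \<subseteq> {0..<n}. \<forall>W' \<subseteq> alts m.
        N' \<noteq> {} \<and> real (card W') / real k \<le> real (card N') / real n
        \<longrightarrow> (\<exists>j\<in>N'. card (P j \<inter> W') \<le> card (P j \<inter> W))}"

definition subset_test :: "('p \<Rightarrow> 'a set) \<Rightarrow> ('p \<Rightarrow> 'a set) \<Rightarrow> 'p \<Rightarrow> 'a set" where
  "subset_test f1 f2 P = (if f1 P \<subseteq> f2 P then f1 P else {})"

definition eq_test :: "('p \<Rightarrow> 'a set) \<Rightarrow> ('p \<Rightarrow> 'a set) \<Rightarrow> 'p \<Rightarrow> 'a set" where
  "eq_test f1 f2 P = (if f1 P = f2 P then f1 P else {})"

end

theory Submission
  imports Defs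
begin

(* Approve alternatives 0 and 1 with probability 1 - eps and every other alternative with
   probability eps = rare_prob k.  Call a ballot typical if it approves 0 and 1 but none of
   2..k.  While fewer than n/k voters are atypical, the committee {1..k} satisfies JR, since
   every group of n/k voters contains a typical voter, who approves 1.  But it is not in the
   core: the more than 2n/k typical voters deviate to {0, 1}, which gives each of them two
   approved members instead of one.  Hence JR is not contained in CORE and both tests return
   the empty set.  That at least n/k voters are atypical is exponentially unlikely, by
   Markov's inequality for 2^(k * #atypical), whose expectation is at most (3/2)^n. *)

abbreviation profile_weight :: "nat \<Rightarrow> (nat \<Rightarrow> real) \<Rightarrow> nat \<Rightarrow> (nat \<Rightarrow> nat set) \<Rightarrow> real" where
  "profile_weight m p n P \<equiv> \<Prod>j<n. ballot_prob m p (P j)"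

lemma sum_profiles_prod:
  fixes h :: "nat set \<Rightarrow> 'a::comm_semiring_1"
  shows "(\<Sum>P\<in>profiles m n. \<Prod>j<n. h (P j)) = (\<Sum>A\<in>Pow (alts m). h A) ^ n"
proof -
  have "(\<Sum>A\<in>Pow (alts m). h A) ^ n = (\<Prod>j\<in>{0..<n}. \<Sum>A\<in>Pow (alts m). h A)"
    by simp
  also have "\<dots> = (\<Sum>P\<in>profiles m n. \<Prod>j\<in>{0..<n}. h (P j))"
    unfolding profiles_def by (rule prod_sum_PiE) (simp_all add: alts_def)
  finally show ?thesis by (simp add: atLeast0LessThan)
qed

lemma sum_ballot_prob_approving_avoiding:
  fixes p :: "nat \<Rightarrow> real"
  assumes "I \<subseteq> alts m" "Q \<subseteq> alts m" "I \<inter> Q = {}"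
  shows "(\<Sum>A\<in>Pow (alts m). if I \<subseteq> A \<and> A \<inter> Q = {} then ballot_prob m p A else 0)
           = (\<Prod>i\<in>I. p i) * (\<Prod>i\<in>Q. 1 - p i)"
proof -
  define f where "f i = (if i \<in> Q then 0 else p i)" for i
  define g where "g i = (if i \<in> I then 0 else 1 - p i)" for i
  have fin: "finite (alts m)" by (simp add: alts_def)
  have factor: "(\<Prod>i\<in>A. f i) * (\<Prod>i\<in>alts m - A. g i)
                = (if I \<subseteq> A \<and> A \<inter> Q = {} then ballot_prob m p A else 0)"
    if "A \<subseteq> alts m" for A
  proof (cases "I \<subseteq> A \<and> A \<inter> Q = {}")
    case True
    then have "(\<Prod>i\<in>A. f i) = (\<Prod>i\<in>A. p i)" "(\<Prod>i\<in>alts m - A. g i) = (\<Prod>i\<in>alts m - A. 1 - p i)"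
      by (auto simp: f_def g_def intro!: prod.cong)
    with True show ?thesis by (simp add: ballot_prob_def)
  next
    case False
    have "finite A" using that fin finite_subset by blast
    with False that assms(1) have "(\<Prod>i\<in>A. f i) = 0 \<or> (\<Prod>i\<in>alts m - A. g i) = 0"
      using fin by (auto simp: f_def g_def)
    with False show ?thesis by auto
  qed
  have "(\<Prod>i\<in>I. p i) * (\<Prod>i\<in>Q. 1 - p i)
          = (\<Prod>i\<in>alts m. if i \<in> I then p i else 1) * (\<Prod>i\<in>alts m. if i \<in> Q then 1 - p i else 1)"
    using assms fin by (simp add: prod.inter_restrict[symmetric] Int_absorb1)
  also have "\<dots> = (\<Prod>i\<in>alts m. f i + g i)"
    unfolding prod.distrib[symmetric] using assms(3)
    by (intro prod.cong) (auto simp: f_def g_def)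
  also have "\<dots> = (\<Sum>A\<in>Pow (alts m). (\<Prod>i\<in>A. f i) * (\<Prod>i\<in>alts m - A. g i))"
    by (rule prod_add[OF fin])
  also have "\<dots> = (\<Sum>A\<in>Pow (alts m). if I \<subseteq> A \<and> A \<inter> Q = {} then ballot_prob m p A else 0)"
    using factor by (intro sum.cong) auto
  finally show ?thesis by simp
qed

lemma sum_ballot_prob: "(\<Sum>A\<in>Pow (alts m). ballot_prob m p A) = 1"
  using sum_ballot_prob_approving_avoiding[of "{}" m "{}" p] by simp

lemma ballot_prob_nonneg:
  assumes "\<forall>i<m. 0 \<le> p i \<and> p i \<le> 1" "A \<subseteq> alts m"
  shows "0 \<le> ballot_prob m p A"
  using assms unfolding ballot_prob_def alts_def
  by (intro mult_nonneg_nonneg prod_nonneg) auto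

lemma profile_weight_nonneg:
  assumes "\<forall>i<m. 0 \<le> p i \<and> p i \<le> 1" "P \<in> profiles m n"
  shows "0 \<le> profile_weight m p n P"
  using assms by (intro prod_nonneg ballot_prob_nonneg) (auto simp: profiles_def)

lemma finite_profiles: "finite (profiles m n)"
  by (simp add: profiles_def alts_def finite_PiE)

lemma prof_prob_compl: "1 - prof_prob m p n E = prof_prob m p n (\<lambda>P. \<not> E P)"
proof -
  have "1 = (\<Sum>P\<in>profiles m n. profile_weight m p n P)"
    by (simp add: sum_profiles_prod sum_ballot_prob)
  also have "\<dots> = prof_prob m p n E + prof_prob m p n (\<lambda>P. \<not> E P)"
    unfolding prof_prob_def using finite_profiles
    by (auto simp: sum.inter_filter sum.distrib[symmetric] intro!: sum.cong)
  finally show ?thesis by simp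
qed

lemma prof_prob_mono:
  assumes "\<forall>i<m. 0 \<le> p i \<and> p i \<le> 1" "\<And>P. P \<in> profiles m n \<Longrightarrow> E P \<Longrightarrow> F P"
  shows "prof_prob m p n E \<le> prof_prob m p n F"
  unfolding prof_prob_def using assms finite_profiles
  by (intro sum_mono2) (auto intro: profile_weight_nonneg)

lemma prof_prob_markov:
  assumes "\<forall>i<m. 0 \<le> p i \<and> p i \<le> 1" "\<And>P. P \<in> profiles m n \<Longrightarrow> 0 \<le> f P" "0 < r"
  shows "prof_prob m p n (\<lambda>P. r \<le> f P) \<le> (\<Sum>P\<in>profiles m n. profile_weight m p n P * f P) / r"
proof -
  let ?w = "profile_weight m p n"
  have "prof_prob m p n (\<lambda>P. r \<le> f P) \<le> (\<Sum>P | P \<in> profiles m n \<and> r \<le> f P. ?w P * f P / r)"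
    unfolding prof_prob_def using assms profile_weight_nonneg
    by (intro sum_mono) (simp add: divide_simps mult_left_mono)
  also have "\<dots> \<le> (\<Sum>P\<in>profiles m n. ?w P * f P / r)"
    using assms finite_profiles
    by (intro sum_mono2) (auto intro!: divide_nonneg_pos mult_nonneg_nonneg profile_weight_nonneg)
  finally show ?thesis by (simp add: sum_divide_distrib)
qed

definition count_voters :: "(nat set \<Rightarrow> bool) \<Rightarrow> nat \<Rightarrow> (nat \<Rightarrow> nat set) \<Rightarrow> nat" where
  "count_voters B n P = card {j\<in>{..<n}. B (P j)}"

lemma moment_count_voters:
  "(\<Sum>P\<in>profiles m n. profile_weight m p n P * x ^ count_voters B n P)
     = (\<Sum>A\<in>Pow (alts m). ballot_prob m p A * (if B A then x else 1)) ^ n"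
proof -
  have "x ^ count_voters B n P = (\<Prod>j<n. if B (P j) then x else 1)" for P
    by (simp add: count_voters_def prod.inter_filter[symmetric])
  then show ?thesis
    by (simp add: sum_profiles_prod[symmetric] prod.distrib)
qed

lemma count_voters_compl: "count_voters B n P + count_voters (\<lambda>A. \<not> B A) n P = n"
proof -
  have "{j\<in>{..<n}. B (P j)} \<union> {j\<in>{..<n}. \<not> B (P j)} = {..<n}" by auto
  then show ?thesis
    unfolding count_voters_def by (subst card_Un_disjoint[symmetric]) auto
qed

lemma JR_if_few_unrepresented:
  assumes "W \<in> committees m k" "0 < k" "k * count_voters (\<lambda>A. A \<inter> W = {}) n P < n"
  shows "W \<in> JR m n k P"
  unfolding JR_def
proof (intro CollectI conjI assms(1) allI impI)
  fix N' assume N': "N' \<subseteq> {0..<n}" "real n / real k \<le> real (card N') \<and> (\<Inter>j\<in>N'. P j) \<noteq> {}"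
  have "n \<le> k * card N'"
    using N'(2) assms(2) by (simp add: divide_le_eq mult.commute flip: of_nat_mult)
  with assms(3) have "count_voters (\<lambda>A. A \<inter> W = {}) n P < card N'"
    by (metis less_le_trans mult_less_cancel1)
  then have "\<not> N' \<subseteq> {j\<in>{..<n}. P j \<inter> W = {}}"
    unfolding count_voters_def using card_mono[of "{j\<in>{..<n}. P j \<inter> W = {}}" N'] by auto
  then show "\<exists>j\<in>N'. P j \<inter> W \<noteq> {}" using N'(1) by auto
qed

definition typical_ballot :: "nat \<Rightarrow> nat set \<Rightarrow> bool" where
  "typical_ballot k A \<longleftrightarrow> {0, 1} \<subseteq> A \<and> A \<inter> {2..k} = {}"

lemma JR_minus_CORE_if_few_atypical:
  assumes "3 \<le> k" "k < m" "k * count_voters (\<lambda>A. \<not> typical_ballot k A) n P < n"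
  shows "{1..k} \<in> JR m n k P - CORE m n k P"
proof
  have W: "{1..k} \<in> committees m k" using assms(2) by (auto simp: committees_def alts_def)
  have "count_voters (\<lambda>A. A \<inter> {1..k} = {}) n P \<le> count_voters (\<lambda>A. \<not> typical_ballot k A) n P"
    unfolding count_voters_def using assms(1) by (intro card_mono) (auto simp: typical_ballot_def)
  then show "{1..k} \<in> JR m n k P"
    using assms(1) le_less_trans[OF mult_le_mono2 assms(3)]
    by (intro JR_if_few_unrepresented[OF W]) auto
  define G where "G = {j\<in>{..<n}. typical_ballot k (P j)}"
  have "card G + count_voters (\<lambda>A. \<not> typical_ballot k A) n P = n"
    using count_voters_compl unfolding G_def count_voters_def by metis
  then have "k * card G + k * count_voters (\<lambda>A. \<not> typical_ballot k A) n P = k * n"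
    by (metis add_mult_distrib2)
  moreover have "3 * n \<le> k * n" using assms(1) by simp
  ultimately have many_typical: "2 * n < k * card G" using assms(3) by linarith
  have ratio: "real (card {0::nat, 1}) / real k \<le> real (card G) / real n"
    using many_typical assms(1,3) by (simp add: divide_simps mult.commute flip: of_nat_mult)
  have prefers_pair: "card (P j \<inter> {1..k}) < card (P j \<inter> {0, 1})" if "j \<in> G" for j
  proof -
    have "P j \<inter> {1..k} = {1}" "P j \<inter> {0, 1} = {0, 1}"
      using that assms(1) by (auto simp: G_def typical_ballot_def)
    then show ?thesis by simp
  qed
  have "G \<noteq> {}" using many_typical by (intro notI) simp
  moreover have "G \<subseteq> {0..<n}" "{0, 1} \<subseteq> alts m" using assms by (auto simp: G_def alts_def)
  ultimately have "\<exists>j\<in>G. card (P j \<inter> {0, 1}) \<le> card (P j \<inter> {1..k})"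
    if "{1..k} \<in> CORE m n k P"
    using that ratio unfolding CORE_def by blast
  with prefers_pair show "{1..k} \<notin> CORE m n k P"
    using leD by blast
qed

(* Chosen so that 2^k * (k + 1) * rare_prob k = 1/2, see atypical_moment_le. *)
definition rare_prob :: "nat \<Rightarrow> real" where
  "rare_prob k = 1 / (2 ^ (k + 1) * (k + 1))"

definition skewed_prob :: "nat \<Rightarrow> nat \<Rightarrow> real" where
  "skewed_prob k i = (if i < 2 then 1 - rare_prob k else rare_prob k)"

lemma rare_prob_bounds: "0 < rare_prob k" "rare_prob k \<le> 1 / 2"
proof -
  have "(1::real) \<le> 2 ^ k" by simp
  also have "\<dots> \<le> 2 ^ k * (k + 1)" by simp
  finally show "0 < rare_prob k" "rare_prob k \<le> 1 / 2"
    by (simp_all add: rare_prob_def divide_simps distrib_left)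
qed

lemma skewed_prob_bounds: "0 < skewed_prob k i" "skewed_prob k i < 1"
  using rare_prob_bounds[of k] by (simp_all add: skewed_prob_def)

lemma typical_ballot_prob:
  assumes "1 \<le> k" "k < m"
  shows "(\<Sum>A\<in>Pow (alts m). if typical_ballot k A then ballot_prob m (skewed_prob k) A else 0)
           = (1 - rare_prob k) ^ (k + 1)"
proof -
  have "(\<Sum>A\<in>Pow (alts m). if typical_ballot k A then ballot_prob m (skewed_prob k) A else 0)
          = (\<Prod>i\<in>{0, 1}. skewed_prob k i) * (\<Prod>i\<in>{2..k}. 1 - skewed_prob k i)"
    unfolding typical_ballot_def using assms
    by (intro sum_ballot_prob_approving_avoiding) (auto simp: alts_def)
  also have "\<dots> = (1 - rare_prob k) ^ 2 * (1 - rare_prob k) ^ (k - 1)"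
    by (simp add: skewed_prob_def power2_eq_square)
  also have "\<dots> = (1 - rare_prob k) ^ (k + 1)"
    using assms(1) by (simp flip: power_add)
  finally show ?thesis .
qed

lemma atypical_moment_le:
  assumes "1 \<le> k" "k < m"
  shows "(\<Sum>A\<in>Pow (alts m). ballot_prob m (skewed_prob k) A
            * (if \<not> typical_ballot k A then 2 ^ k else 1)) \<le> 3 / 2"
proof -
  let ?w = "ballot_prob m (skewed_prob k)" and ?e = "rare_prob k"
  have "(\<Sum>A\<in>Pow (alts m). ?w A * (if \<not> typical_ballot k A then 2 ^ k else 1))
          = (\<Sum>A\<in>Pow (alts m). 2 ^ k * ?w A - (2 ^ k - 1) * (if typical_ballot k A then ?w A else 0))"
    by (intro sum.cong) (auto simp: algebra_simps)
  also have "\<dots> = 2 ^ k - (2 ^ k - 1) * (1 - ?e) ^ (k + 1)"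
    using typical_ballot_prob[OF assms]
    by (simp add: sum_subtractf sum_distrib_left[symmetric] sum_ballot_prob)
  also have "\<dots> \<le> 2 ^ k - (2 ^ k - 1) * (1 - (k + 1) * ?e)"
    using Bernoulli_inequality[of "- ?e" "k + 1"] rare_prob_bounds[of k]
    by (intro diff_left_mono mult_left_mono) (auto simp: one_le_power)
  also have "\<dots> \<le> 1 + 2 ^ k * ((k + 1) * ?e)"
    using rare_prob_bounds[of k] by (simp add: algebra_simps)
  also have "2 ^ k * ((k + 1) * ?e) = 1 / 2"
    unfolding rare_prob_def by (simp add: divide_simps add_pos_nonneg)
  finally show ?thesis by simp
qed

lemma few_atypical_voters_prob:
  assumes "1 \<le> k" "k < m"
  shows "1 - prof_prob m (skewed_prob k) n (\<lambda>P. k * count_voters (\<lambda>A. \<not> typical_ballot k A) n P < n)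
           \<le> (3 / 4) ^ n"
proof -
  let ?p = "skewed_prob k" and ?Z = "count_voters (\<lambda>A. \<not> typical_ballot k A) n"
  have p: "\<forall>i<m. 0 \<le> ?p i \<and> ?p i \<le> 1"
    using skewed_prob_bounds[of k] by (simp add: less_imp_le)
  have "1 - prof_prob m ?p n (\<lambda>P. k * ?Z P < n) = prof_prob m ?p n (\<lambda>P. n \<le> k * ?Z P)"
    by (simp add: prof_prob_compl not_less)
  also have "\<dots> \<le> prof_prob m ?p n (\<lambda>P. 2 ^ n \<le> (2 ^ k :: real) ^ ?Z P)"
    using p by (rule prof_prob_mono) (simp add: power_mult[symmetric] power_increasing)
  also have "\<dots> \<le> (\<Sum>P\<in>profiles m n. profile_weight m ?p n P * (2 ^ k) ^ ?Z P) / 2 ^ n"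
    using p by (rule prof_prob_markov) auto
  also have "\<dots> = (\<Sum>A\<in>Pow (alts m). ballot_prob m ?p A
                    * (if \<not> typical_ballot k A then 2 ^ k else 1)) ^ n / 2 ^ n"
    by (simp only: moment_count_voters)
  also have "\<dots> \<le> (3 / 2) ^ n / 2 ^ n"
    using p atypical_moment_le[OF assms]
    by (intro divide_right_mono power_mono sum_nonneg mult_nonneg_nonneg ballot_prob_nonneg) auto
  also have "\<dots> = (3 / 4) ^ n"
    by (simp flip: power_divide)
  finally show ?thesis .
qed

lemma exp_likely_if_few_atypical:
  assumes "1 \<le> k" "k < m"
    and "\<And>n P. k * count_voters (\<lambda>A. \<not> typical_ballot k A) n P < n \<Longrightarrow> E n P"
  shows "\<exists>c>0. \<exists>N. \<forall>n\<ge>N. 1 - prof_prob m (skewed_prob k) n (E n) \<le> exp (- c * real n)"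
proof (intro exI[of _ "ln (4 / 3)"] conjI exI[of _ 0] allI impI)
  fix n
  let ?few = "\<lambda>P. k * count_voters (\<lambda>A. \<not> typical_ballot k A) n P < n"
  have "1 - prof_prob m (skewed_prob k) n (E n) \<le> 1 - prof_prob m (skewed_prob k) n ?few"
    using skewed_prob_bounds[of k] assms(3) by (simp add: less_imp_le prof_prob_mono)
  also have "\<dots> \<le> (3 / 4) ^ n"
    using assms(1,2) by (rule few_atypical_voters_prob)
  also have "\<dots> = exp (ln (3 / 4)) ^ n"
    by simp
  also have "\<dots> = exp (- ln (4 / 3) * real n)"
    by (simp add: ln_div flip: exp_of_nat_mult)
  finally show "1 - prof_prob m (skewed_prob k) n (E n) \<le> exp (- ln (4 / 3) * real n)" .
qed simp

theorem proposition2: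
  fixes m k :: nat
  assumes "m \<ge> 4" and "k \<ge> 3" and "k < m"
  shows "\<exists>p :: nat \<Rightarrow> real. (\<forall>i<m. 0 < p i \<and> p i < 1) \<and>
    (\<exists>c>0. \<exists>N. \<forall>n\<ge>N.
       1 - prof_prob m p n (\<lambda>P. card (subset_test (JR m n k) (CORE m n k) P) = 0)
         \<le> exp (- c * real n)) \<and>
    (\<exists>c>0. \<exists>N. \<forall>n\<ge>N.
       1 - prof_prob m p n (\<lambda>P. card (eq_test (JR m n k) (CORE m n k) P) = 0)
         \<le> exp (- c * real n))"
proof (intro exI[of _ "skewed_prob k"] conjI)
  show "\<forall>i<m. 0 < skewed_prob k i \<and> skewed_prob k i < 1"
    using skewed_prob_bounds by blast
  have JR_not_subset: "\<not> JR m n k P \<subseteq> CORE m n k P"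
    if "k * count_voters (\<lambda>A. \<not> typical_ballot k A) n P < n" for n P
    using JR_minus_CORE_if_few_atypical[OF assms(2,3) that] by blast
  have "1 \<le> k" using assms(2) by simp
  note exp_likely = exp_likely_if_few_atypical[OF this assms(3)]
  show "\<exists>c>0. \<exists>N. \<forall>n\<ge>N.
       1 - prof_prob m (skewed_prob k) n (\<lambda>P. card (subset_test (JR m n k) (CORE m n k) P) = 0)
         \<le> exp (- c * real n)"
    and "\<exists>c>0. \<exists>N. \<forall>n\<ge>N.
       1 - prof_prob m (skewed_prob k) n (\<lambda>P. card (eq_test (JR m n k) (CORE m n k) P) = 0)
         \<le> exp (- c * real n)"
    by (rule exp_likely, force simp: subset_test_def eq_test_def dest: JR_not_subset)+
qed

end
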